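(* Let $n \ge 2$ and let $Q(x) = x_1x_2 + x_3x_4 + \cdots + x_{2n-1}x_{2n}$ be the hyperbolic quadratic form on $V(2n,2)$, with associated symmetric bilinear form $B(x,y) = Q(x+y)-Q(x)-Q(y)$ and orthogonality $\perp$ with respect to $B$. Let $\Pi$ and $\Sigma$ be two totally singular $n$-dimensional subspaces with $\Pi \cap \Sigma = 0$. For a non-singular point $X$, put $G = X^\perp \cap \Pi$, $H = X^\perp \cap \Sigma$, $P = G^\perp \cap \Sigma$, and define $f(X) = (P,H)$. Then $f$ is a bijection from the set of non-singular points of $V(2n,2)$ (with respect to $Q$) onto the set of point-hyperplane antiflags of $\Sigma \cong V(n,2)$.
   Context: Points are $1$-dimensional subspaces. A point $\langle x\rangle$ is singular if $Q(x)=0$, non-singular otherwise; a subspace is totally singular if all its points are singular. A point-hyperplane antiflag of $\Sigma$ is a pair $(P,H)$ with $P$ a $1$-dimensional subspace of $\Sigma$, $H$ an $(n-1)$-dimensional subspace of $\Sigma$, and $P \not\subseteq H$. *)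

theory Defs
  imports Complex_Main "HOL-Library.Z2" "HOL-Library.Function_Algebras"
begin

text \<open>Vectors of V(m,2) are represented as functions nat => bit (bit = GF(2))
  vanishing outside the coordinates 0..m-1; coordinates x_1..x_2n of the paper
  are x 0 .. x (2n-1).\<close>

type_synonym vec2 = "nat \<Rightarrow> bit"

definition scale2 :: "bit \<Rightarrow> vec2 \<Rightarrow> vec2" where
  "scale2 c x = (\<lambda>i. c * x i)"

lemma vector_space_scale2: "vector_space scale2"
  by unfold_locales (auto simp: scale2_def fun_eq_iff algebra_simps)

definition Vsp :: "nat \<Rightarrow> vec2 set" where
  "Vsp m = {x. \<forall>i\<ge>m. x i = 0}"

abbreviation subsp :: "vec2 set \<Rightarrow> bool" where
  "subsp S \<equiv> module.subspace scale2 S"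

abbreviation span2 :: "vec2 set \<Rightarrow> vec2 set" where
  "span2 S \<equiv> module.span scale2 S"

abbreviation dim2 :: "vec2 set \<Rightarrow> nat" where
  "dim2 S \<equiv> vector_space.dim scale2 S"

definition Qhyp :: "nat \<Rightarrow> vec2 \<Rightarrow> bit" where
  "Qhyp n x = (\<Sum>i<n. x (2*i) * x (2*i+1))"

definition Bhyp :: "nat \<Rightarrow> vec2 \<Rightarrow> vec2 \<Rightarrow> bit" where
  "Bhyp n x y = Qhyp n (x + y) - Qhyp n x - Qhyp n y"

definition perp :: "nat \<Rightarrow> vec2 set \<Rightarrow> vec2 set" where
  "perp n S = {y \<in> Vsp (2*n). \<forall>x\<in>S. Bhyp n y x = 0}"

definition totally_singular :: "nat \<Rightarrow> vec2 set \<Rightarrow> bool" where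
  "totally_singular n S \<longleftrightarrow> (\<forall>x\<in>S. Qhyp n x = 0)"

definition nonsingular_points :: "nat \<Rightarrow> vec2 set set" where
  "nonsingular_points n = {span2 {x} | x. x \<in> Vsp (2*n) \<and> x \<noteq> 0 \<and> Qhyp n x \<noteq> 0}"

definition antiflags :: "nat \<Rightarrow> vec2 set \<Rightarrow> (vec2 set \<times> vec2 set) set" where
  "antiflags n \<Sigma> = {(P, H). subsp P \<and> P \<subseteq> \<Sigma> \<and> dim2 P = 1 \<and>
                            subsp H \<and> H \<subseteq> \<Sigma> \<and> dim2 H = n - 1 \<and> \<not> P \<subseteq> H}"

definition fmap :: "nat \<Rightarrow> vec2 set \<Rightarrow> vec2 set \<Rightarrow> vec2 set \<Rightarrow> vec2 set \<times> vec2 set" where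
  "fmap n \<Pi> \<Sigma> X = (let G = perp n X \<inter> \<Pi>; H = perp n X \<inter> \<Sigma>; P = perp n G \<inter> \<Sigma> in (P, H))"

end

theory Submission
  imports Defs
begin

text \<open>Write x = a + s with a \<in> \<Pi> and s \<in> \<Sigma>; this is possible and unique because
  V(2n,2) = \<Pi> \<oplus> \<Sigma>. Since \<Pi> and \<Sigma> are totally singular, Q(x) = B(a,s), so the non-singular
  points are exactly the vectors a + s with B(a,s) = 1, and f sends such a point to
  (\<langle>s\<rangle>, a^\<bottom> \<inter> \<Sigma>). As B restricted to \<Pi> \<times> \<Sigma> is a non-degenerate pairing, a \<mapsto> a^\<bottom> \<inter> \<Sigma> is a
  bijection from the non-zero vectors of \<Pi> onto the hyperplanes of \<Sigma>, and given the hyperplane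
  a^\<bottom> \<inter> \<Sigma>, the points \<langle>s\<rangle> of \<Sigma> off it are exactly those with B(a,s) = 1.\<close>

text \<open>The default simp rules rewrite + and * on bit to xor and and; we keep the field operations.\<close>
declare add_bit_eq_xor [simp del] mult_bit_eq_and [simp del]

interpretation V: vector_space scale2
  by (rule vector_space_scale2)

lemma bit_add_self [simp]: "(b::bit) + b = 0"
  by (cases b) simp_all

lemma bit_add_eq_0_iff: "(x::bit) + y = 0 \<longleftrightarrow> x = y"
  by (cases x; cases y) simp_all

lemma vec2_add_self [simp]: "(x::vec2) + x = 0"
  by (simp add: fun_eq_iff)

lemma vec2_diff_eq_add [simp]: "(x::vec2) - y = x + y"
  by (simp add: fun_eq_iff)

lemma vec2_add_cancel_left [simp]: "(x::vec2) + (x + y) = y"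
  by (simp flip: add.assoc)

lemma vec2_add_eq_0_iff: "(x::vec2) + y = 0 \<longleftrightarrow> x = y"
  by (metis vec2_add_cancel_left vec2_add_self add.right_neutral)

lemma scale2_0 [simp]: "scale2 0 x = 0"
  and scale2_1 [simp]: "scale2 1 x = x"
  by (simp_all add: scale2_def fun_eq_iff)

lemma subsp_iff: "subsp S \<longleftrightarrow> 0 \<in> S \<and> (\<forall>x\<in>S. \<forall>y\<in>S. x + y \<in> S)"
proof -
  have "scale2 c x \<in> S" if "0 \<in> S" "x \<in> S" for c x
    by (cases c) (simp_all add: that)
  then show ?thesis
    by (auto simp: V.subspace_def)
qed

lemma span2_singleton: "span2 {x} = {0, x}"
proof -
  have "scale2 c x \<in> {0, x}" for c
    by (cases c) simp_all
  then show ?thesis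
    unfolding V.span_singleton by (auto intro: range_eqI[of _ _ 0] range_eqI[of _ _ 1])
qed

lemma vec2_translate_image: "(\<lambda>x. x + b) ` S = {x. x + b \<in> (S::vec2 set)}"
proof -
  have "x \<in> (\<lambda>x. x + b) ` S" if "x + b \<in> S" for x
    using that by (rule image_eqI[rotated]) (simp add: add.assoc)
  then show ?thesis
    by (auto simp: add.assoc)
qed

lemma span2_insert: "span2 (insert b F) = span2 F \<union> (\<lambda>x. x + b) ` span2 F"
proof -
  have "x - scale2 k b \<in> span2 F \<longleftrightarrow> (k = 0 \<and> x \<in> span2 F) \<or> (k = 1 \<and> x + b \<in> span2 F)" for x k
    by (cases k) simp_all
  then show ?thesis
    unfolding V.span_insert vec2_translate_image by blast
qed

lemma card_Un_translate:
  fixes t :: "'a::cancel_semigroup_add"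
  assumes "finite K" and "K \<inter> (\<lambda>x. x + t) ` K = {}"
  shows "card (K \<union> (\<lambda>x. x + t) ` K) = 2 * card K"
proof -
  have "inj_on (\<lambda>x. x + t) K"
    by (rule inj_onI) simp
  then show ?thesis
    using assms by (simp add: card_Un_disjoint card_image)
qed

lemma finite_span2: "finite F \<Longrightarrow> finite (span2 F)"
  by (induction F rule: finite_induct) (simp_all add: span2_insert)

lemma card_span2_independent:
  assumes "finite F" and "V.independent F"
  shows "card (span2 F) = 2 ^ card F"
  using assms
proof (induction F rule: finite_induct)
  case empty
  then show ?case by simp
next
  case (insert b F)
  then have "V.independent F" and b: "b \<notin> span2 F"
    by (auto simp: V.independent_insert)
  have "span2 F \<inter> (\<lambda>x. x + b) ` span2 F = {}"
    unfolding vec2_translate_image using b by (force dest: V.span_add)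
  then show ?case
    using insert \<open>V.independent F\<close>
    by (simp add: span2_insert card_Un_translate finite_span2)
qed

lemma card_subsp:
  assumes "subsp S" and "finite S"
  shows "card S = 2 ^ dim2 S"
proof -
  obtain B where B: "B \<subseteq> S" "V.independent B" "S \<subseteq> span2 B" "card B = dim2 S"
    by (rule V.basis_exists)
  then have "span2 B = S"
    using V.span_minimal assms(1) by blast
  with B assms(2) show ?thesis
    using card_span2_independent[of B] finite_subset by metis
qed

lemma dim2_eq_iff_card:
  assumes "subsp S" and "finite S"
  shows "dim2 S = k \<longleftrightarrow> card S = 2 ^ k"
  using card_subsp[OF assms] by (simp add: power_inject_exp)

lemma dim2_eq_1_iff:
  assumes "subsp S" and "finite S"
  shows "dim2 S = 1 \<longleftrightarrow> (\<exists>s. s \<noteq> 0 \<and> S = {0, s})"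
proof -
  have "card S = 2 \<longleftrightarrow> (\<exists>s. s \<noteq> 0 \<and> S = {0, s})"
    using V.subspace_0[OF assms(1)] by (auto simp: card_2_iff doubleton_eq_iff)
  then show ?thesis
    using dim2_eq_iff_card[OF assms, of 1] by simp
qed

lemma card_kernel_functional:
  fixes l :: "vec2 \<Rightarrow> bit"
  assumes A: "subsp A" "finite A" and l: "\<And>x y. l (x + y) = l x + l y"
    and t: "t \<in> A" "l t = 1"
  shows "card A = 2 * card {x\<in>A. l x = 0}"
proof -
  let ?K = "{x\<in>A. l x = 0}"
  have "x + t \<in> A \<longleftrightarrow> x \<in> A" for x
  proof
    assume "x + t \<in> A"
    then have "(x + t) + t \<in> A"
      using t(1) by (rule V.subspace_add[OF A(1)])
    then show "x \<in> A"
      by (simp add: add.assoc)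
  qed (use t(1) V.subspace_add[OF A(1)] in blast)
  then have "A = ?K \<union> (\<lambda>x. x + t) ` ?K"
    unfolding vec2_translate_image using l t(2) by auto
  moreover have "?K \<inter> (\<lambda>x. x + t) ` ?K = {}"
    using t l by auto
  ultimately show ?thesis
    using A(2) card_Un_translate[of ?K t] by simp
qed

lemma card_le_kernel_functional:
  fixes l :: "vec2 \<Rightarrow> bit"
  assumes "subsp A" "finite A" and "\<And>x y. l (x + y) = l x + l y"
  shows "card A \<le> 2 * card {x\<in>A. l x = 0}"
proof (cases "\<exists>t\<in>A. l t = 1")
  case True
  then obtain t where "t \<in> A" "l t = 1"
    by blast
  then show ?thesis
    using card_kernel_functional[OF assms] by simp
next
  case False
  then have "{x\<in>A. l x = 0} = A"
    by auto
  then show ?thesis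
    by simp
qed

lemma Vsp_add: "x \<in> Vsp m \<Longrightarrow> y \<in> Vsp m \<Longrightarrow> x + y \<in> Vsp m"
  by (simp add: Vsp_def)

lemma bij_betw_Vsp_Pow: "bij_betw (\<lambda>x. {i. x i = 1}) (Vsp m) (Pow {..<m})"
  by (rule bij_betw_byWitness[where f' = "\<lambda>I i. if i \<in> I then 1 else 0"])
    (auto simp: Vsp_def fun_eq_iff, metis leI zero_neq_one)

lemma finite_Vsp: "finite (Vsp m)"
  using bij_betw_finite[OF bij_betw_Vsp_Pow] by simp

lemma card_Vsp: "card (Vsp m) = 2 ^ m"
  using bij_betw_same_card[OF bij_betw_Vsp_Pow] by (simp add: card_Pow)

lemma Bhyp_eq_sum: "Bhyp n x y = (\<Sum>i<n. x (2*i) * y (2*i+1) + y (2*i) * x (2*i+1))"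
  unfolding Bhyp_def Qhyp_def
  by (simp add: sum.distrib[symmetric] sum_subtractf[symmetric] algebra_simps)

lemma Bhyp_sym: "Bhyp n x y = Bhyp n y x"
  unfolding Bhyp_eq_sum by (simp add: algebra_simps)

lemma Bhyp_add_left: "Bhyp n (x + x') y = Bhyp n x y + Bhyp n x' y"
  unfolding Bhyp_eq_sum by (simp add: algebra_simps sum.distrib)

lemma Bhyp_add_right: "Bhyp n y (x + x') = Bhyp n y x + Bhyp n y x'"
  using Bhyp_add_left Bhyp_sym by metis

lemma Bhyp_0_left [simp]: "Bhyp n 0 y = 0"
  and Bhyp_0_right [simp]: "Bhyp n y 0 = 0"
  unfolding Bhyp_eq_sum by simp_all

lemma Qhyp_0 [simp]: "Qhyp n 0 = 0"
  by (simp add: Qhyp_def)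

lemma Qhyp_add: "Qhyp n (x + y) = Qhyp n x + Qhyp n y + Bhyp n x y"
  unfolding Bhyp_def by (simp add: algebra_simps)

lemma Bhyp_totally_singular:
  assumes "subsp S" "totally_singular n S" "u \<in> S" "v \<in> S"
  shows "Bhyp n u v = 0"
  using assms Qhyp_add[of n u v] by (auto simp: totally_singular_def subsp_iff)

lemma Bhyp_nondegenerate:
  assumes y: "y \<in> Vsp (2*n)" and orth: "\<And>z. z \<in> Vsp (2*n) \<Longrightarrow> Bhyp n y z = 0"
  shows "y = 0"
proof
  fix j
  define e :: "nat \<Rightarrow> vec2" where "e k = (\<lambda>i. of_bool (i = k))" for k
  have Bhyp_e: "Bhyp n y (e (2*i)) = y (2*i+1)" "Bhyp n y (e (2*i+1)) = y (2*i)" if "i < n" for i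
  proof -
    have "{..<n} \<inter> {k. k = i} = {i}"
      using that by auto
    then show "Bhyp n y (e (2*i)) = y (2*i+1)" "Bhyp n y (e (2*i+1)) = y (2*i)"
      unfolding Bhyp_eq_sum e_def by (simp_all add: Suc_double_not_eq_double double_not_eq_Suc_double)
  qed
  have e_Vsp: "e k \<in> Vsp (2*n)" if "k < 2*n" for k
    using that by (simp add: Vsp_def e_def)
  show "y j = 0 j"
  proof (cases "j < 2*n")
    case True
    define i where "i = j div 2"
    have i: "i < n" "2*i < 2*n" "2*i+1 < 2*n"
      using True unfolding i_def by presburger+
    have "j = 2*i \<or> j = 2*i+1"
      unfolding i_def by presburger
    then show ?thesis
      using Bhyp_e[OF i(1)] orth[OF e_Vsp[OF i(2)]] orth[OF e_Vsp[OF i(3)]] by auto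
  qed (use y in \<open>simp add: Vsp_def\<close>)
qed

lemma card_le_common_kernel:
  assumes "finite F" and A: "subsp A" "finite A"
  shows "card A \<le> 2 ^ card F * card {a\<in>A. \<forall>h\<in>F. Bhyp n h a = 0}"
  using assms(1)
proof (induction F rule: finite_induct)
  case (insert h F)
  let ?K = "{a\<in>A. \<forall>h\<in>F. Bhyp n h a = 0}"
  have "subsp ?K" "finite ?K"
    using A by (auto simp: subsp_iff Bhyp_add_right)
  then have "card ?K \<le> 2 * card {a\<in>?K. Bhyp n h a = 0}"
    by (rule card_le_kernel_functional) (rule Bhyp_add_right)
  moreover have "{a\<in>?K. Bhyp n h a = 0} = {a\<in>A. \<forall>h\<in>insert h F. Bhyp n h a = 0}"
    by auto
  ultimately show ?case
    using insert by (simp add: order_trans)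
qed simp

lemma perp_point: "perp n {0, x} = {y \<in> Vsp (2*n). Bhyp n y x = 0}"
  by (auto simp: perp_def)

locale opposite_generators =
  fixes n :: nat and \<Pi> \<Sigma> :: "vec2 set"
  assumes subsp_Pi: "subsp \<Pi>" and Pi_subset: "\<Pi> \<subseteq> Vsp (2*n)"
    and dim_Pi: "dim2 \<Pi> = n" and totally_singular_Pi: "totally_singular n \<Pi>"
    and subsp_Sigma: "subsp \<Sigma>" and Sigma_subset: "\<Sigma> \<subseteq> Vsp (2*n)"
    and dim_Sigma: "dim2 \<Sigma> = n" and totally_singular_Sigma: "totally_singular n \<Sigma>"
    and Pi_Int_Sigma: "\<Pi> \<inter> \<Sigma> = {0}"
begin

lemma finite_Pi: "finite \<Pi>"
  using Pi_subset finite_Vsp finite_subset by blast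

lemma finite_Sigma: "finite \<Sigma>"
  using Sigma_subset finite_Vsp finite_subset by blast

lemma card_Pi: "card \<Pi> = 2 ^ n"
  using card_subsp[OF subsp_Pi finite_Pi] dim_Pi by simp

lemma card_Sigma: "card \<Sigma> = 2 ^ n"
  using card_subsp[OF subsp_Sigma finite_Sigma] dim_Sigma by simp

lemma Bhyp_Pi [simp]: "u \<in> \<Pi> \<Longrightarrow> v \<in> \<Pi> \<Longrightarrow> Bhyp n u v = 0"
  by (rule Bhyp_totally_singular[OF subsp_Pi totally_singular_Pi])

lemma Bhyp_Sigma [simp]: "u \<in> \<Sigma> \<Longrightarrow> v \<in> \<Sigma> \<Longrightarrow> Bhyp n u v = 0"
  by (rule Bhyp_totally_singular[OF subsp_Sigma totally_singular_Sigma])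

lemma Pi_add: "u \<in> \<Pi> \<Longrightarrow> v \<in> \<Pi> \<Longrightarrow> u + v \<in> \<Pi>"
  by (rule V.subspace_add[OF subsp_Pi])

lemma Sigma_add: "u \<in> \<Sigma> \<Longrightarrow> v \<in> \<Sigma> \<Longrightarrow> u + v \<in> \<Sigma>"
  by (rule V.subspace_add[OF subsp_Sigma])

text \<open>The sum map \<Pi> \<times> \<Sigma> \<rightarrow> V(2n,2) is injective as \<Pi> \<inter> \<Sigma> = 0, hence onto by counting.\<close>
lemma Pi_Sigma_decomp:
  assumes "x \<in> Vsp (2*n)"
  obtains a s where "a \<in> \<Pi>" "s \<in> \<Sigma>" "x = a + s"
proof -
  let ?sum = "\<lambda>(a, s). a + s"
  have "inj_on ?sum (\<Pi> \<times> \<Sigma>)"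
  proof (rule inj_onI, clarsimp)
    fix a s a' s'
    assume as: "a \<in> \<Pi>" "s \<in> \<Sigma>" "a' \<in> \<Pi>" "s' \<in> \<Sigma>" and eq: "a + s = a' + s'"
    have "(a + a') + (s + s') = (a + s) + (a' + s')"
      by (simp only: ac_simps)
    then have "a + a' = s + s'"
      using eq by (simp add: vec2_add_eq_0_iff)
    moreover have "a + a' \<in> \<Pi>" "s + s' \<in> \<Sigma>"
      using as Pi_add Sigma_add by auto
    ultimately have "a + a' = 0" "s + s' = 0"
      using Pi_Int_Sigma by auto
    then show "a = a' \<and> s = s'"
      by (simp add: vec2_add_eq_0_iff)
  qed
  then have "card (?sum ` (\<Pi> \<times> \<Sigma>)) = card \<Pi> * card \<Sigma>"
    by (simp add: card_image card_cartesian_product)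
  also have "\<dots> = card (Vsp (2*n))"
    by (simp add: card_Pi card_Sigma card_Vsp mult_2 power_add)
  finally have "card (?sum ` (\<Pi> \<times> \<Sigma>)) = card (Vsp (2*n))" .
  moreover have "?sum ` (\<Pi> \<times> \<Sigma>) \<subseteq> Vsp (2*n)"
    using Pi_subset Sigma_subset by (auto intro: Vsp_add)
  ultimately have "?sum ` (\<Pi> \<times> \<Sigma>) = Vsp (2*n)"
    using card_subset_eq[OF finite_Vsp] by blast
  with assms have "x \<in> ?sum ` (\<Pi> \<times> \<Sigma>)"
    by simp
  with that show ?thesis
    by auto
qed

lemma orthogonal_Pi_Sigma_eq_0:
  assumes "y \<in> Vsp (2*n)" "\<And>a. a \<in> \<Pi> \<Longrightarrow> Bhyp n y a = 0" "\<And>s. s \<in> \<Sigma> \<Longrightarrow> Bhyp n y s = 0"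
  shows "y = 0"
proof (rule Bhyp_nondegenerate[OF assms(1)])
  fix z
  assume "z \<in> Vsp (2*n)"
  then obtain a s where "a \<in> \<Pi>" "s \<in> \<Sigma>" "z = a + s"
    by (rule Pi_Sigma_decomp)
  then show "Bhyp n y z = 0"
    using assms by (simp add: Bhyp_add_right)
qed

definition Sigma_perp :: "vec2 \<Rightarrow> vec2 set" where
  "Sigma_perp a = {h\<in>\<Sigma>. Bhyp n h a = 0}"

lemma Sigma_perp_inj:
  assumes "a \<in> \<Pi>" "a' \<in> \<Pi>" "Sigma_perp a = Sigma_perp a'"
  shows "a = a'"
proof -
  have "Bhyp n (a + a') h = 0" if "h \<in> \<Sigma>" for h
  proof -
    have "Bhyp n h a = 0 \<longleftrightarrow> Bhyp n h a' = 0"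
      using assms(3) that by (auto simp: Sigma_perp_def set_eq_iff)
    then have "Bhyp n h a = Bhyp n h a'"
      by (metis bit_not_zero_iff)
    then show ?thesis
      by (simp add: Bhyp_add_left Bhyp_sym[of n _ h])
  qed
  then have "a + a' = 0"
    using assms(1,2) Pi_subset by (intro orthogonal_Pi_Sigma_eq_0) (auto intro: Vsp_add simp: Bhyp_add_left)
  then show ?thesis
    by (simp add: vec2_add_eq_0_iff)
qed

lemma subsp_Sigma_perp: "subsp (Sigma_perp a)"
  using subsp_Sigma by (auto simp: Sigma_perp_def subsp_iff Bhyp_add_left)

lemma card_Sigma_perp:
  assumes "a \<in> \<Pi>" "a \<noteq> 0"
  shows "card (Sigma_perp a) = 2 ^ (n - 1)"
proof -
  have "\<exists>s\<in>\<Sigma>. Bhyp n s a \<noteq> 0"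
  proof (rule ccontr)
    assume "\<not> ?thesis"
    then have "a = 0"
      using assms(1) Pi_subset by (intro orthogonal_Pi_Sigma_eq_0) (auto simp: Bhyp_sym[of n a])
    with assms(2) show False ..
  qed
  then obtain s where s: "s \<in> \<Sigma>" "Bhyp n s a = 1"
    by auto
  have "2 ^ n = 2 * card (Sigma_perp a)"
    unfolding Sigma_perp_def card_Sigma[symmetric]
    by (rule card_kernel_functional[OF subsp_Sigma finite_Sigma Bhyp_add_left s])
  then show ?thesis
    by (cases n) simp_all
qed

lemma dim_Sigma_perp:
  assumes "a \<in> \<Pi>" "a \<noteq> 0"
  shows "dim2 (Sigma_perp a) = n - 1"
proof -
  have "finite (Sigma_perp a)"
    using finite_Sigma by (simp add: Sigma_perp_def)
  then show ?thesis
    using dim2_eq_iff_card[OF subsp_Sigma_perp] card_Sigma_perp[OF assms] by simp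
qed

text \<open>The vectors of \<Pi> orthogonal to a basis of H form a subspace of at least two elements,
  since each of the n - 1 basis vectors at most halves \<Pi>.\<close>
lemma hyperplane_eq_Sigma_perp:
  assumes H: "subsp H" "H \<subseteq> \<Sigma>" "dim2 H = n - 1" and "0 < n"
  obtains a where "a \<in> \<Pi>" "a \<noteq> 0" "H = Sigma_perp a"
proof -
  obtain B where B: "B \<subseteq> H" "V.independent B" "H \<subseteq> span2 B" "card B = n - 1"
    using V.basis_exists H(3) by metis
  have "finite H"
    using H(2) finite_Sigma finite_subset by blast
  with B(1) have "finite B"
    by (rule finite_subset)
  let ?K = "{a\<in>\<Pi>. \<forall>h\<in>B. Bhyp n h a = 0}"
  have "card \<Pi> = 2 * 2 ^ (n - 1)"
    using card_Pi \<open>0 < n\<close> by (cases n) simp_all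
  then have "2 * 2 ^ (n - 1) \<le> 2 ^ (n - 1) * card ?K"
    using card_le_common_kernel[OF \<open>finite B\<close> subsp_Pi finite_Pi] B(4) by simp
  then have "2 \<le> card ?K"
    by simp
  have "\<not> ?K \<subseteq> {0}"
  proof
    assume "?K \<subseteq> {0}"
    then have "card ?K \<le> 1"
      using card_mono[of "{0}" ?K] by simp
    with \<open>2 \<le> card ?K\<close> show False
      by simp
  qed
  then obtain a where a: "a \<in> \<Pi>" "a \<noteq> 0" "\<forall>h\<in>B. Bhyp n h a = 0"
    by blast
  have "span2 B \<subseteq> {h. Bhyp n h a = 0}"
    by (rule V.span_minimal) (use a(3) in \<open>auto simp: subsp_iff Bhyp_add_left\<close>)
  with B(3) H(2) have "H \<subseteq> Sigma_perp a"
    by (auto simp: Sigma_perp_def)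
  moreover have "card H = card (Sigma_perp a)"
    using card_subsp[OF H(1) \<open>finite H\<close>] H(3) card_Sigma_perp[OF a(1,2)] by simp
  ultimately have "H = Sigma_perp a"
    using finite_Sigma by (intro card_subset_eq) (auto simp: Sigma_perp_def)
  with a that show ?thesis
    by blast
qed

lemma perp_Pi_hyperplane:
  assumes a: "a \<in> \<Pi>" and s: "s \<in> \<Sigma>" and as: "Bhyp n a s = 1"
  shows "perp n {g\<in>\<Pi>. Bhyp n g s = 0} \<inter> \<Sigma> = {0, s}"
proof (intro equalityI subsetI)
  fix p
  assume "p \<in> perp n {g\<in>\<Pi>. Bhyp n g s = 0} \<inter> \<Sigma>"
  then have p: "p \<in> \<Sigma>" "p \<in> Vsp (2*n)"
    and p_perp: "\<And>g. g \<in> \<Pi> \<Longrightarrow> Bhyp n g s = 0 \<Longrightarrow> Bhyp n p g = 0"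
    by (auto simp: perp_def)
  have pairing: "Bhyp n p a' = Bhyp n p a * Bhyp n a' s" if a': "a' \<in> \<Pi>" for a'
  proof (cases "Bhyp n a' s = 0")
    case True
    then show ?thesis
      using p_perp a' by simp
  next
    case False
    then have "Bhyp n (a' + a) s = 0"
      using as by (simp add: Bhyp_add_left)
    then have "Bhyp n p (a' + a) = 0"
      using p_perp a' a Pi_add by blast
    then have "Bhyp n p a' + Bhyp n p a = 0"
      by (simp add: Bhyp_add_right)
    then show ?thesis
      using False by (simp add: bit_add_eq_0_iff)
  qed
  show "p \<in> {0, s}"
  proof (cases "Bhyp n p a = 0")
    case True
    then have "p = 0"
      using pairing p by (intro orthogonal_Pi_Sigma_eq_0) auto
    then show ?thesis
      by simp
  next
    case False
    then have "p + s = 0"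
      using pairing p s Sigma_subset
      by (intro orthogonal_Pi_Sigma_eq_0) (auto intro: Vsp_add simp: Bhyp_add_left Bhyp_sym[of n s])
    then show ?thesis
      by (simp add: vec2_add_eq_0_iff)
  qed
next
  fix p
  assume "p \<in> {0, s}"
  then show "p \<in> perp n {g\<in>\<Pi>. Bhyp n g s = 0} \<inter> \<Sigma>"
    using s Sigma_subset V.subspace_0[OF subsp_Sigma] by (auto simp: perp_def Bhyp_sym[of n s])
qed

lemma fmap_point:
  assumes "a \<in> \<Pi>" "s \<in> \<Sigma>" "Bhyp n a s = 1"
  shows "fmap n \<Pi> \<Sigma> {0, a + s} = ({0, s}, Sigma_perp a)"
proof -
  have "perp n {0, a + s} \<inter> \<Pi> = {g\<in>\<Pi>. Bhyp n g s = 0}"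
    using assms(1) Pi_subset by (auto simp: perp_point Bhyp_add_right)
  moreover have "perp n {0, a + s} \<inter> \<Sigma> = Sigma_perp a"
    using assms(2) Sigma_subset by (auto simp: perp_point Sigma_perp_def Bhyp_add_right)
  ultimately show ?thesis
    using perp_Pi_hyperplane[OF assms] by (simp add: fmap_def)
qed

lemma nonsingular_points_eq:
  "nonsingular_points n = {{0, a + s} | a s. a \<in> \<Pi> \<and> s \<in> \<Sigma> \<and> Bhyp n a s = 1}"
proof -
  have Q: "Qhyp n (a + s) = Bhyp n a s" if "a \<in> \<Pi>" "s \<in> \<Sigma>" for a s
    using that totally_singular_Pi totally_singular_Sigma by (simp add: Qhyp_add totally_singular_def)
  show ?thesis
  proof (intro equalityI subsetI)
    fix X
    assume "X \<in> nonsingular_points n"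
    then obtain x where x: "X = {0, x}" "x \<in> Vsp (2*n)" "Qhyp n x \<noteq> 0"
      by (auto simp: nonsingular_points_def span2_singleton)
    then obtain a s where "a \<in> \<Pi>" "s \<in> \<Sigma>" "x = a + s"
      by (blast elim: Pi_Sigma_decomp)
    with x Q show "X \<in> {{0, a + s} | a s. a \<in> \<Pi> \<and> s \<in> \<Sigma> \<and> Bhyp n a s = 1}"
      by auto
  next
    fix X
    assume "X \<in> {{0, a + s} | a s. a \<in> \<Pi> \<and> s \<in> \<Sigma> \<and> Bhyp n a s = 1}"
    then obtain a s where as: "X = {0, a + s}" "a \<in> \<Pi>" "s \<in> \<Sigma>" "Bhyp n a s = 1"
      by blast
    then have "a + s \<in> Vsp (2*n)" "Qhyp n (a + s) = 1"
      using Pi_subset Sigma_subset Q by (auto intro: Vsp_add)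
    then show "X \<in> nonsingular_points n"
      unfolding nonsingular_points_def span2_singleton as(1)
      by (metis (mono_tags, lifting) Qhyp_0 mem_Collect_eq zero_neq_one)
  qed
qed

lemma inj_on_fmap: "inj_on (fmap n \<Pi> \<Sigma>) (nonsingular_points n)"
proof (rule inj_onI)
  fix X Y
  assume "X \<in> nonsingular_points n" "Y \<in> nonsingular_points n"
    and eq: "fmap n \<Pi> \<Sigma> X = fmap n \<Pi> \<Sigma> Y"
  then obtain a s a' s' where
    X: "X = {0, a + s}" "a \<in> \<Pi>" "s \<in> \<Sigma>" "Bhyp n a s = 1" and
    Y: "Y = {0, a' + s'}" "a' \<in> \<Pi>" "s' \<in> \<Sigma>" "Bhyp n a' s' = 1"
    by (auto simp: nonsingular_points_eq)
  have "{0, s} = {0, s'}" "Sigma_perp a = Sigma_perp a'"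
    using eq fmap_point[OF X(2-4)] fmap_point[OF Y(2-4)] X(1) Y(1) by simp_all
  moreover have "s \<noteq> 0" "s' \<noteq> 0"
    using X(4) Y(4) by auto
  ultimately have "s = s'" "a = a'"
    using Sigma_perp_inj[OF X(2) Y(2)] by (auto simp: doubleton_eq_iff)
  with X(1) Y(1) show "X = Y"
    by simp
qed

lemma fmap_image_subset_antiflags: "fmap n \<Pi> \<Sigma> ` nonsingular_points n \<subseteq> antiflags n \<Sigma>"
proof (rule image_subsetI)
  fix X
  assume "X \<in> nonsingular_points n"
  then obtain a s where as: "X = {0, a + s}" "a \<in> \<Pi>" "s \<in> \<Sigma>" "Bhyp n a s = 1"
    by (auto simp: nonsingular_points_eq)
  then have "a \<noteq> 0" "s \<noteq> 0"
    by auto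
  have "subsp {0, s}"
    using V.subspace_span[of "{s}"] by (simp add: span2_singleton)
  moreover have "dim2 {0, s} = 1"
    using dim2_eq_1_iff[OF \<open>subsp {0, s}\<close>] \<open>s \<noteq> 0\<close> by auto
  moreover have "Sigma_perp a \<subseteq> \<Sigma>" "\<not> {0, s} \<subseteq> Sigma_perp a"
    using as(4) by (auto simp: Sigma_perp_def Bhyp_sym[of n s])
  ultimately show "fmap n \<Pi> \<Sigma> X \<in> antiflags n \<Sigma>"
    unfolding as(1) fmap_point[OF as(2-4)] antiflags_def
    using as(3) V.subspace_0[OF subsp_Sigma] subsp_Sigma_perp dim_Sigma_perp[OF as(2) \<open>a \<noteq> 0\<close>]
    by auto
qed

lemma antiflags_subset_fmap_image: "antiflags n \<Sigma> \<subseteq> fmap n \<Pi> \<Sigma> ` nonsingular_points n"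
proof (rule subrelI)
  fix P H
  assume "(P, H) \<in> antiflags n \<Sigma>"
  then have P: "subsp P" "P \<subseteq> \<Sigma>" "dim2 P = 1" and H: "subsp H" "H \<subseteq> \<Sigma>" "dim2 H = n - 1"
    and "\<not> P \<subseteq> H"
    by (auto simp: antiflags_def)
  obtain s where s: "P = {0, s}" "s \<noteq> 0"
    using dim2_eq_1_iff[OF P(1)] P(2,3) finite_Sigma finite_subset by blast
  have "card P \<le> card \<Sigma>"
    using P(2) finite_Sigma by (rule card_mono[rotated])
  then have "0 < n"
    using s card_Sigma by (cases n) auto
  then obtain a where a: "a \<in> \<Pi>" "a \<noteq> 0" "H = Sigma_perp a"
    using hyperplane_eq_Sigma_perp[OF H] by blast
  have "s \<in> \<Sigma>" "Bhyp n a s = 1"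
    using s(1) P(2) \<open>\<not> P \<subseteq> H\<close> a(3) V.subspace_0[OF H(1)] by (auto simp: Sigma_perp_def Bhyp_sym[of n s])
  then have "(P, H) = fmap n \<Pi> \<Sigma> {0, a + s}" and "{0, a + s} \<in> nonsingular_points n"
    using fmap_point[OF a(1)] s a(3) by (auto simp: nonsingular_points_eq a(1))
  then show "(P, H) \<in> fmap n \<Pi> \<Sigma> ` nonsingular_points n"
    by blast
qed

theorem bij_betw_fmap: "bij_betw (fmap n \<Pi> \<Sigma>) (nonsingular_points n) (antiflags n \<Sigma>)"
  unfolding bij_betw_def
  using inj_on_fmap fmap_image_subset_antiflags antiflags_subset_fmap_image by blast

end

theorem mainTheorem2:
  fixes n :: nat and \<Pi> \<Sigma> :: "vec2 set"
  assumes "n \<ge> 2"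
    and "subsp \<Pi>" and "\<Pi> \<subseteq> Vsp (2*n)" and "dim2 \<Pi> = n" and "totally_singular n \<Pi>"
    and "subsp \<Sigma>" and "\<Sigma> \<subseteq> Vsp (2*n)" and "dim2 \<Sigma> = n" and "totally_singular n \<Sigma>"
    and "\<Pi> \<inter> \<Sigma> = {0}"
  shows "bij_betw (fmap n \<Pi> \<Sigma>) (nonsingular_points n) (antiflags n \<Sigma>)"
proof -
  interpret opposite_generators n \<Pi> \<Sigma>
    using assms(2-) by unfold_locales
  show ?thesis
    by (rule bij_betw_fmap)
qed

end
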